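(* Let $\mathcal O$ be the suboperad of $\mathrm{CNCB}$ generated by $a:=T_{bbb}$ and $w:=T_{bub}$. Then $\mathcal O$ admits the presentation with generators $a,w$ of arity $2$ and relations $$w\circ_1 w=w\circ_2 w,\qquad a\circ_1 w=a\circ_2 w.$$ That is, $\mathcal O$ is isomorphic, via the morphism sending the generators to $a$ and $w$, to the quotient of the free operad on two binary generators by the operadic congruence generated by these relations.
   Context: For $n\ge2$, a bicoloured noncrossing configuration (BNC) of size $n$ is a regular polygon with vertices $1,\dots,n+1$ clockwise, together with disjoint sets of blue and red arcs among the arcs $(i,j)$, $1\le i<j\le n+1$. The arcs $(i,i+1)$ are the edges ($i$th edge), $(1,n+1)$ is the base, and the others are diagonals. Coloured arcs are pairwise noncrossing ($(i,j),(k,l)$ cross iff $i<k<j<l$ or $k<i<l<j$), and red arcs are diagonals. There is one BNC of size $1$, a blue segment, which is the unit. The operad $\mathrm{CNCB}$ has the BNCs as elements (arity = size). Its composition $\mathfrak C\circ_i\mathfrak D$ ($\mathfrak C$ of size $n$, $\mathfrak D$ of size $m$) glues the base of $\mathfrak D$ on the $i$th edge of $\mathfrak C$. Arcs $(a,b)$ of $\mathfrak C$ become $(\sigma(a),\sigma(b))$ with $\sigma(v)=v$ for $v\le i$ and $v+m-1$ otherwise, and arcs $(a,b)$ of $\mathfrak D$ become $(a+i-1,b+i-1)$, keeping colours. The exception is the arc $(i,i+m)$, which is red if the $i$th edge of $\mathfrak C$ and the base of $\mathfrak D$ are both uncoloured, blue if both are blue, and uncoloured otherwise. For $x,y,z\in\{b,u\}$,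 $T_{xyz}$ denotes the BNC of size $2$ (a triangle with vertices $1,2,3$) whose first edge $(1,2)$ has colour $x$, whose base $(1,3)$ has colour $y$, and whose second edge $(2,3)$ has colour $z$, where $b$ = blue and $u$ = uncoloured. The suboperad generated by a set is the smallest suboperad containing it. *)

theory Defs
  imports Main
begin

text \<open>A BNC of size n: polygon with vertices 1..n+1; arcs are pairs (i,j) with i<j.
  We record the size, the set of blue arcs and the set of red arcs.\<close>

datatype bnc = BNC (bnc_size: nat) (bnc_blue: "(nat \<times> nat) set") (bnc_red: "(nat \<times> nat) set")

definition is_arc :: "nat \<Rightarrow> nat \<times> nat \<Rightarrow> bool" where
  "is_arc n e \<longleftrightarrow> 1 \<le> fst e \<and> fst e < snd e \<and> snd e \<le> n + 1"

definition is_diagonal :: "nat \<Rightarrow> nat \<times> nat \<Rightarrow> bool" where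
  "is_diagonal n e \<longleftrightarrow> is_arc n e \<and> snd e \<noteq> fst e + 1 \<and> e \<noteq> (1, n + 1)"

definition crosses :: "nat \<times> nat \<Rightarrow> nat \<times> nat \<Rightarrow> bool" where
  "crosses e f \<longleftrightarrow> (case e of (i, j) \<Rightarrow> case f of (k, l) \<Rightarrow>
      (i < k \<and> k < j \<and> j < l) \<or> (k < i \<and> i < l \<and> l < j))"

text \<open>Being an element of CNCB (for documentation; the unit is the unique BNC of size 1).\<close>
definition is_bnc :: "bnc \<Rightarrow> bool" where
  "is_bnc C \<longleftrightarrow>
     (bnc_size C = 1 \<and> bnc_blue C = {(1, 2)} \<and> bnc_red C = {}) \<or>
     (bnc_size C \<ge> 2 \<and>
      (\<forall>e \<in> bnc_blue C. is_arc (bnc_size C) e) \<and>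
      (\<forall>e \<in> bnc_red C. is_diagonal (bnc_size C) e) \<and>
      bnc_blue C \<inter> bnc_red C = {} \<and>
      (\<forall>e \<in> bnc_blue C \<union> bnc_red C. \<forall>f \<in> bnc_blue C \<union> bnc_red C. \<not> crosses e f))"

definition bnc_unit :: bnc where
  "bnc_unit = BNC 1 {(1, 2)} {}"

text \<open>Partial composition C \<circ>_i D: glue the base of D on the i-th edge of C.\<close>
definition bnc_comp :: "bnc \<Rightarrow> nat \<Rightarrow> bnc \<Rightarrow> bnc" where
  "bnc_comp C i D =
    (let n = bnc_size C; m = bnc_size D;
         \<sigma> = (\<lambda>v. if v \<le> i then v else v + m - 1);
         mC = (\<lambda>A. (\<lambda>(a, b). (\<sigma> a, \<sigma> b)) ` A);
         mD = (\<lambda>A. (\<lambda>(a, b). (a + i - 1, b + i - 1)) ` A);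
         e = (i, i + m);
         edge_blue = ((i, i + 1) \<in> bnc_blue C);
         edge_unc = ((i, i + 1) \<notin> bnc_blue C \<and> (i, i + 1) \<notin> bnc_red C);
         base_blue = ((1, m + 1) \<in> bnc_blue D);
         base_unc = ((1, m + 1) \<notin> bnc_blue D \<and> (1, m + 1) \<notin> bnc_red D)
     in BNC (n + m - 1)
          (((mC (bnc_blue C) \<union> mD (bnc_blue D)) - {e}) \<union>
             (if edge_blue \<and> base_blue then {e} else {}))
          (((mC (bnc_red C) \<union> mD (bnc_red D)) - {e}) \<union>
             (if edge_unc \<and> base_unc then {e} else {})))"

text \<open>T_xyz: first edge (1,2) colour x, base (1,3) colour y, second edge (2,3) colour z.\<close>
definition T_bbb :: bnc where "T_bbb = BNC 2 {(1, 2), (1, 3), (2, 3)} {}"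
definition T_bub :: bnc where "T_bub = BNC 2 {(1, 2), (2, 3)} {}"

inductive_set gen_suboperad :: "bnc set \<Rightarrow> bnc set" for G :: "bnc set" where
  unit: "bnc_unit \<in> gen_suboperad G"
| gen: "g \<in> G \<Longrightarrow> g \<in> gen_suboperad G"
| comp: "x \<in> gen_suboperad G \<Longrightarrow> y \<in> gen_suboperad G \<Longrightarrow> 1 \<le> i \<Longrightarrow> i \<le> bnc_size x
          \<Longrightarrow> bnc_comp x i y \<in> gen_suboperad G"

datatype gname = GA | GW

datatype ftree = Leaf | Node gname ftree ftree

fun arity :: "ftree \<Rightarrow> nat" where
  "arity Leaf = 1"
| "arity (Node g l r) = arity l + arity r"

fun graft :: "ftree \<Rightarrow> nat \<Rightarrow> ftree \<Rightarrow> ftree" where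
  "graft Leaf i s = s"
| "graft (Node g l r) i s =
     (if i \<le> arity l then Node g (graft l i s) r else Node g l (graft r (i - arity l) s))"

abbreviation fgen :: "gname \<Rightarrow> ftree" where
  "fgen g \<equiv> Node g Leaf Leaf"

inductive ocong :: "ftree \<Rightarrow> ftree \<Rightarrow> bool" where
  rel_w: "ocong (graft (fgen GW) 1 (fgen GW)) (graft (fgen GW) 2 (fgen GW))"
| rel_a: "ocong (graft (fgen GA) 1 (fgen GW)) (graft (fgen GA) 2 (fgen GW))"
| refl: "ocong t t"
| sym: "ocong t s \<Longrightarrow> ocong s t"
| trans: "ocong t s \<Longrightarrow> ocong s u \<Longrightarrow> ocong t u"
| comp_right: "ocong t t' \<Longrightarrow> 1 \<le> i \<Longrightarrow> i \<le> arity s \<Longrightarrow> ocong (graft s i t) (graft s i t')"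
| comp_left: "ocong t t' \<Longrightarrow> 1 \<le> i \<Longrightarrow> i \<le> arity t \<Longrightarrow> ocong (graft t i s) (graft t' i s)"

fun gen_val :: "gname \<Rightarrow> bnc" where
  "gen_val GA = T_bbb"
| "gen_val GW = T_bub"

fun eval :: "ftree \<Rightarrow> bnc" where
  "eval Leaf = bnc_unit"
| "eval (Node g l r) = bnc_comp (bnc_comp (gen_val g) 2 (eval r)) 1 (eval l)"

end

theory Submission
  imports Defs
begin

text \<open>
  Every tree evaluates to a configuration without red arcs whose edges are all blue; its
  remaining blue arcs are the arcs spanned by the A-nodes, a W-node contributing nothing.
  Composing such configurations never creates a red arc (the glued edge is blue), so eval
  is a morphism onto the generated suboperad, and eval t is determined by the arity of t
  and the set of arcs of its A-nodes. Both relations preserve this set, since they only move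
  a W-node. Conversely, they let a W-node slide from the left to the right child of its
  parent; once the left child of the root is not a W-node, the label of the root, the arity
  of the left subtree and the arc sets of both subtrees can be read off the arc set, and
  induction on the arity shows that trees with equal evaluations are congruent.
\<close>

definition polygon_edges :: "nat \<Rightarrow> (nat \<times> nat) set" where
  "polygon_edges n = {(k, k + 1) | k. 1 \<le> k \<and> k \<le> n}"

definition long_arcs :: "(nat \<times> nat) set \<Rightarrow> bool" where
  "long_arcs A \<longleftrightarrow> (\<forall>(a, b) \<in> A. a + 2 \<le> b)"

definition shift_arcs :: "nat \<Rightarrow> (nat \<times> nat) set \<Rightarrow> (nat \<times> nat) set" where
  "shift_arcs k A = (\<lambda>(a, b). (a + k, b + k)) ` A"

text \<open>The relabelling \<open>\<sigma>\<close> of the vertices of the outer configuration in bnc_comp.\<close>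
definition outer_relabel :: "nat \<Rightarrow> nat \<Rightarrow> nat \<Rightarrow> nat" where
  "outer_relabel i m v = (if v \<le> i then v else v + m - 1)"

definition outer_arcs :: "nat \<Rightarrow> nat \<Rightarrow> (nat \<times> nat) set \<Rightarrow> (nat \<times> nat) set" where
  "outer_arcs i m A = (\<lambda>(a, b). (outer_relabel i m a, outer_relabel i m b)) ` A"

definition blue_bnc :: "nat \<Rightarrow> (nat \<times> nat) set \<Rightarrow> bnc" where
  "blue_bnc n A = BNC n (polygon_edges n \<union> A) {}"

lemma mem_polygon_edges: "(a, b) \<in> polygon_edges n \<longleftrightarrow> 1 \<le> a \<and> a \<le> n \<and> b = a + 1"
  unfolding polygon_edges_def by auto

lemma long_arcs_disjoint_polygon_edges: "long_arcs A \<Longrightarrow> A \<inter> polygon_edges n = {}"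
  unfolding long_arcs_def polygon_edges_def by fastforce

lemma shift_arcs_empty [simp]: "shift_arcs k {} = {}"
  by (simp add: shift_arcs_def)

lemma shift_arcs_Un: "shift_arcs k (A \<union> B) = shift_arcs k A \<union> shift_arcs k B"
  unfolding shift_arcs_def by auto

lemma shift_arcs_mem_iff [simp]: "(a + k, b + k) \<in> shift_arcs k A \<longleftrightarrow> (a, b) \<in> A"
  unfolding shift_arcs_def by force

lemma outer_arcs_empty [simp]: "outer_arcs i m {} = {}"
  by (simp add: outer_arcs_def)

lemma outer_arcs_Un: "outer_arcs i m (A \<union> B) = outer_arcs i m A \<union> outer_arcs i m B"
  unfolding outer_arcs_def by auto

lemma outer_arcs_polygon_edges:
  assumes "1 \<le> i" "i \<le> n" "1 \<le> m"
  shows "outer_arcs i m (polygon_edges n) \<union> shift_arcs (i - 1) (polygon_edges m)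
       = polygon_edges (n + m - 1) \<union> {(i, i + m)}"
proof (intro set_eqI iffI)
  fix x assume "x \<in> outer_arcs i m (polygon_edges n) \<union> shift_arcs (i - 1) (polygon_edges m)"
  then consider k where "1 \<le> k" "k \<le> n" "x = (outer_relabel i m k, outer_relabel i m (k + 1))"
    | k where "1 \<le> k" "k \<le> m" "x = (k + (i - 1), k + 1 + (i - 1))"
    unfolding outer_arcs_def shift_arcs_def polygon_edges_def by auto
  then show "x \<in> polygon_edges (n + m - 1) \<union> {(i, i + m)}"
  proof cases
    case (1 k)
    then show ?thesis using assms
      by (cases "k < i"; cases "k = i") (auto simp: outer_relabel_def mem_polygon_edges)
  next
    case (2 k)
    then show ?thesis using assms by (auto simp: mem_polygon_edges)
  qed
next
  fix x assume "x \<in> polygon_edges (n + m - 1) \<union> {(i, i + m)}"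
  then consider "x = (i, i + m)" | k where "1 \<le> k" "k \<le> n + m - 1" "x = (k, k + 1)"
    unfolding polygon_edges_def by blast
  then show "x \<in> outer_arcs i m (polygon_edges n) \<union> shift_arcs (i - 1) (polygon_edges m)"
  proof cases
    case 1
    have "(i, i + 1) \<in> polygon_edges n" using assms by (simp add: mem_polygon_edges)
    then show ?thesis using 1 assms unfolding outer_arcs_def outer_relabel_def by force
  next
    case (2 k)
    consider (outer_left) "k < i" | (inner) "i \<le> k" "k < i + m" | (outer_right) "i + m \<le> k"
      by linarith
    then show ?thesis
    proof cases
      case outer_left
      then have "(k, k + 1) \<in> polygon_edges n" using 2 assms by (simp add: mem_polygon_edges)
      then show ?thesis using outer_left 2 unfolding outer_arcs_def outer_relabel_def by force
    next
      case inner
      then have "(k + 1 - i, k + 2 - i) \<in> polygon_edges m" using assms by (auto simp: mem_polygon_edges)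
      then show ?thesis using inner 2 assms unfolding shift_arcs_def by force
    next
      case outer_right
      then have "(k + 1 - m, k + 2 - m) \<in> polygon_edges n" using 2 assms by (auto simp: mem_polygon_edges)
      moreover have "outer_relabel i m (k + 1 - m) = k" "outer_relabel i m (k + 2 - m) = k + 1"
        using outer_right assms by (auto simp: outer_relabel_def)
      ultimately show ?thesis using 2 unfolding outer_arcs_def by force
    qed
  qed
qed

lemma bnc_comp_blue_bnc:
  assumes i: "1 \<le> i" "i \<le> n" and m: "1 \<le> m" and long: "long_arcs A"
  shows "bnc_comp (blue_bnc n A) i (blue_bnc m B)
       = blue_bnc (n + m - 1) (outer_arcs i m A \<union> shift_arcs (i - 1) B)"
proof -
  let ?e = "(i, i + m)"
  have inner: "(\<lambda>(a, b). (a + i - 1, b + i - 1)) ` X = shift_arcs (i - 1) X" for X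
    unfolding shift_arcs_def using i by (intro image_cong) auto
  have edge_i: "(i, i + 1) \<in> polygon_edges n" using i by (simp add: mem_polygon_edges)
  have e_outer: "?e \<notin> outer_arcs i m A"
    using long m unfolding long_arcs_def outer_arcs_def outer_relabel_def by (fastforce split: if_splits)
  have "?e = (1 + (i - 1), m + 1 + (i - 1))" using i by simp
  then have e_inner: "?e \<in> shift_arcs (i - 1) B \<longleftrightarrow> (1, m + 1) \<in> B"
    by (simp only: shift_arcs_mem_iff)
  have base_edge: "(1, m + 1) \<in> polygon_edges m \<longleftrightarrow> m = 1"
    using m by (simp add: mem_polygon_edges)
  have e_edge: "?e \<in> polygon_edges (n + m - 1) \<longleftrightarrow> m = 1"
    using i m by (auto simp: mem_polygon_edges)
  have "outer_arcs i m (polygon_edges n \<union> A) \<union> shift_arcs (i - 1) (polygon_edges m \<union> B)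
      = polygon_edges (n + m - 1) \<union> {?e} \<union> (outer_arcs i m A \<union> shift_arcs (i - 1) B)"
    using outer_arcs_polygon_edges[OF i m] unfolding outer_arcs_Un shift_arcs_Un by auto
  then have blue: "((outer_arcs i m (polygon_edges n \<union> A) \<union> shift_arcs (i - 1) (polygon_edges m \<union> B)) - {?e})
       \<union> (if (1, m + 1) \<in> polygon_edges m \<union> B then {?e} else {})
     = polygon_edges (n + m - 1) \<union> (outer_arcs i m A \<union> shift_arcs (i - 1) B)"
    using e_outer e_inner base_edge e_edge by (cases "m = 1") auto
  \<comment> \<open>no red arc arises, since the edge \<open>(i, i + 1)\<close> of the outer configuration is blue\<close>
  have "bnc_comp (blue_bnc n A) i (blue_bnc m B) = BNC (n + m - 1)
      (((outer_arcs i m (polygon_edges n \<union> A) \<union> shift_arcs (i - 1) (polygon_edges m \<union> B)) - {?e})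
       \<union> (if (1, m + 1) \<in> polygon_edges m \<union> B then {?e} else {})) {}"
  proof -
    have outer: "(\<lambda>(a, b). (if a \<le> i then a else a + m - 1, if b \<le> i then b else b + m - 1)) ` X
        = outer_arcs i m X" for X
      by (simp add: outer_arcs_def outer_relabel_def)
    show ?thesis
      using edge_i unfolding bnc_comp_def Let_def blue_bnc_def bnc.sel outer inner by simp
  qed
  then show ?thesis unfolding blue_bnc_def blue by simp
qed

lemma blue_bnc_eq_iff:
  assumes "long_arcs A" "long_arcs B"
  shows "blue_bnc n A = blue_bnc n' B \<longleftrightarrow> n = n' \<and> A = B"
  using long_arcs_disjoint_polygon_edges[OF assms(1), of n] long_arcs_disjoint_polygon_edges[OF assms(2), of n]
  unfolding blue_bnc_def by auto

text \<open>One arc per A-node, from the first vertex of its leftmost leaf to the last vertex of its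
  rightmost leaf; this is where the generator \<open>a\<close> puts its blue base.\<close>
fun tree_arcs :: "ftree \<Rightarrow> (nat \<times> nat) set" where
  "tree_arcs Leaf = {}"
| "tree_arcs (Node g l r) = (if g = GA then {(1, arity l + arity r + 1)} else {})
      \<union> tree_arcs l \<union> shift_arcs (arity l) (tree_arcs r)"

lemma arity_pos: "1 \<le> arity t"
  by (induction t) auto

lemma arity_eq_1_iff: "arity t = 1 \<longleftrightarrow> t = Leaf"
proof (cases t)
  case (Node g l r)
  then show ?thesis using arity_pos[of l] arity_pos[of r] by simp
qed simp

lemma arity_graft: "1 \<le> i \<Longrightarrow> i \<le> arity t \<Longrightarrow> arity (graft t i s) = arity t + arity s - 1"
proof (induction t arbitrary: i)
  case (Node g l r)
  then show ?case using arity_pos[of s] arity_pos[of r] by auto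
qed simp

lemma tree_arcs_NodeE:
  assumes "(a, b) \<in> tree_arcs (Node g l r)"
  obtains "g = GA" "a = 1" "b = arity l + arity r + 1"
  | "(a, b) \<in> tree_arcs l"
  | a' b' where "(a', b') \<in> tree_arcs r" "a = a' + arity l" "b = b' + arity l"
  using assms by (auto simp: shift_arcs_def split: if_splits)

lemma tree_arcs_bounds: "(a, b) \<in> tree_arcs t \<Longrightarrow> 1 \<le> a \<and> a + 2 \<le> b \<and> b \<le> arity t + 1"
proof (induction t arbitrary: a b)
  case (Node g l r)
  have pos: "1 \<le> arity l" "1 \<le> arity r" by (rule arity_pos)+
  from Node.prems show ?case
  proof (rule tree_arcs_NodeE)
    fix a' b' assume "(a', b') \<in> tree_arcs r" "a = a' + arity l" "b = b' + arity l"
    then show ?case using Node.IH(2)[of a' b'] by simp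
  qed (use Node.IH(1)[of a b] pos in auto)
qed simp

lemma long_arcs_tree_arcs: "long_arcs (tree_arcs t)"
  unfolding long_arcs_def using tree_arcs_bounds by blast

lemma outer_arcs_shift_arcs_above:
  assumes "i \<le> k" "1 \<le> m" "\<forall>(a, b) \<in> A. 1 \<le> a \<and> 1 \<le> b"
  shows "outer_arcs i m (shift_arcs k A) = shift_arcs (k + m - 1) A"
  unfolding outer_arcs_def shift_arcs_def image_image
  by (rule image_cong) (use assms in \<open>auto simp: outer_relabel_def\<close>)

lemma outer_arcs_shift_arcs_below:
  assumes "k < i"
  shows "outer_arcs i m (shift_arcs k A) = shift_arcs k (outer_arcs (i - k) m A)"
  unfolding outer_arcs_def shift_arcs_def image_image
  by (rule image_cong) (use assms in \<open>auto simp: outer_relabel_def\<close>)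

lemma outer_arcs_below:
  assumes "\<forall>(a, b) \<in> A. a \<le> b \<and> b \<le> i"
  shows "outer_arcs i m A = A"
proof -
  have "outer_arcs i m A = id ` A"
    unfolding outer_arcs_def by (rule image_cong) (use assms in \<open>auto simp: outer_relabel_def\<close>)
  then show ?thesis by simp
qed

lemma shift_arcs_shift_arcs: "shift_arcs k (shift_arcs j A) = shift_arcs (j + k) A"
  unfolding shift_arcs_def image_image by (rule image_cong) auto

lemma tree_arcs_graft:
  "1 \<le> i \<Longrightarrow> i \<le> arity t \<Longrightarrow>
   tree_arcs (graft t i s) = outer_arcs i (arity s) (tree_arcs t) \<union> shift_arcs (i - 1) (tree_arcs s)"
proof (induction t arbitrary: i)
  case Leaf
  then show ?case by (simp add: shift_arcs_def outer_arcs_def)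
next
  case (Node g l r)
  let ?m = "arity s"
  have pos: "1 \<le> ?m" "1 \<le> arity l" "1 \<le> arity r" by (rule arity_pos)+
  have root: "outer_arcs i ?m (if g = GA then {(1, arity l + arity r + 1)} else {})
      = (if g = GA then {(1, arity l + arity r + ?m)} else {})"
    using Node.prems pos by (auto simp: outer_arcs_def outer_relabel_def)
  show ?case
  proof (cases "i \<le> arity l")
    case True
    have "outer_arcs i ?m (shift_arcs (arity l) (tree_arcs r)) = shift_arcs (arity l + ?m - 1) (tree_arcs r)"
      by (rule outer_arcs_shift_arcs_above) (use True pos tree_arcs_bounds in fastforce)+
    then show ?thesis
      using True Node.IH(1)[OF Node.prems(1) True] arity_graft[OF Node.prems(1) True] root pos
      by (auto simp: outer_arcs_Un)
  next
    case False
    let ?k = "arity l"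
    have i: "1 \<le> i - ?k" "i - ?k \<le> arity r" using False Node.prems by auto
    have "outer_arcs i ?m (tree_arcs l) = tree_arcs l"
      by (rule outer_arcs_below) (use False tree_arcs_bounds in fastforce)
    moreover have "outer_arcs i ?m (shift_arcs ?k (tree_arcs r)) = shift_arcs ?k (outer_arcs (i - ?k) ?m (tree_arcs r))"
      using False by (simp add: outer_arcs_shift_arcs_below)
    moreover have "shift_arcs ?k (shift_arcs (i - ?k - 1) (tree_arcs s)) = shift_arcs (i - 1) (tree_arcs s)"
      using False i by (simp add: shift_arcs_shift_arcs)
    ultimately show ?thesis
      using False Node.IH(2)[OF i] arity_graft[OF i] root pos
      by (auto simp: outer_arcs_Un shift_arcs_Un)
  qed
qed

lemma bnc_size_bnc_comp: "bnc_size (bnc_comp C i D) = bnc_size C + bnc_size D - 1"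
  by (simp add: bnc_comp_def Let_def)

lemma bnc_comp_tree_bnc:
  assumes "1 \<le> i" "i \<le> arity t"
  shows "bnc_comp (blue_bnc (arity t) (tree_arcs t)) i (blue_bnc (arity s) (tree_arcs s))
       = blue_bnc (arity (graft t i s)) (tree_arcs (graft t i s))"
  unfolding bnc_comp_blue_bnc[OF assms arity_pos[of s] long_arcs_tree_arcs[of t]]
    arity_graft[OF assms] tree_arcs_graft[OF assms] ..

lemma gen_val_eq_blue_bnc: "gen_val g = blue_bnc (arity (fgen g)) (tree_arcs (fgen g))"
proof -
  have "polygon_edges (arity (fgen g)) = {(1, 2), (2, 3)}" by (auto simp: mem_polygon_edges)
  then show ?thesis
    by (cases g) (simp_all add: blue_bnc_def T_bbb_def T_bub_def insert_commute numeral_3_eq_3)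
qed

lemma eval_eq_blue_bnc: "eval t = blue_bnc (arity t) (tree_arcs t)"
proof (induction t)
  case Leaf
  have "polygon_edges 1 = {(1, 2)}" by (auto simp: mem_polygon_edges)
  then show ?case by (simp add: blue_bnc_def bnc_unit_def)
next
  case (Node g l r)
  have "eval (Node g l r) = bnc_comp (bnc_comp (blue_bnc (arity (fgen g)) (tree_arcs (fgen g))) 2
      (blue_bnc (arity r) (tree_arcs r))) 1 (blue_bnc (arity l) (tree_arcs l))"
    using Node.IH by (simp only: eval.simps gen_val_eq_blue_bnc)
  also have "\<dots> = blue_bnc (arity (Node g l r)) (tree_arcs (Node g l r))"
    using bnc_comp_tree_bnc[of 2 "fgen g" r] bnc_comp_tree_bnc[of 1 "Node g Leaf r" l] arity_pos[of r]
    by simp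
  finally show ?case .
qed

lemma bnc_size_eval: "bnc_size (eval t) = arity t"
  by (simp add: eval_eq_blue_bnc blue_bnc_def)

lemma eval_graft: "1 \<le> i \<Longrightarrow> i \<le> arity t \<Longrightarrow> eval (graft t i s) = bnc_comp (eval t) i (eval s)"
  by (simp add: eval_eq_blue_bnc bnc_comp_tree_bnc)

lemma eval_eq_iff: "eval t = eval s \<longleftrightarrow> arity t = arity s \<and> tree_arcs t = tree_arcs s"
  by (simp add: eval_eq_blue_bnc blue_bnc_eq_iff long_arcs_tree_arcs)

lemma ocong_imp_eval_eq: "ocong t s \<Longrightarrow> eval t = eval s"
proof (induction rule: ocong.induct)
  case (comp_right t t' i s)
  then show ?case by (simp add: eval_graft)
next
  case (comp_left t t' i s)
  then have "arity t = arity t'" by (simp add: eval_eq_iff)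
  with comp_left show ?case by (simp add: eval_graft)
qed (auto simp: eval_eq_iff simp del: eval.simps)

lemma eval_in_gen_suboperad: "eval t \<in> gen_suboperad {T_bbb, T_bub}"
proof (induction t)
  case (Node g l r)
  have gen: "gen_val g \<in> gen_suboperad {T_bbb, T_bub}"
    by (cases g) (simp_all add: gen_suboperad.gen)
  have "bnc_size (gen_val g) = 2"
    by (cases g) (simp_all add: T_bbb_def T_bub_def)
  then show ?case
    using gen_suboperad.comp[OF gen_suboperad.comp[OF gen Node.IH(2)] Node.IH(1)]
    by (simp add: bnc_size_bnc_comp)
qed (simp add: gen_suboperad.unit)

lemma gen_suboperad_in_range_eval: "x \<in> gen_suboperad {T_bbb, T_bub} \<Longrightarrow> x \<in> range eval"
proof (induction rule: gen_suboperad.induct)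
  case unit
  show ?case using rangeI[of eval Leaf] by simp
next
  case (gen g)
  have "gen_val h \<in> range eval" for h
    unfolding gen_val_eq_blue_bnc eval_eq_blue_bnc[symmetric] by (rule rangeI)
  moreover from gen have "g = gen_val GA \<or> g = gen_val GW" by simp
  ultimately show ?case by blast
next
  case (comp x y i)
  then obtain t s where "x = eval t" "y = eval s" by blast
  with comp.hyps have "bnc_comp x i y = eval (graft t i s)" by (simp add: eval_graft bnc_size_eval)
  then show ?case by simp
qed

lemma ocong_Node_left: "ocong l l' \<Longrightarrow> ocong (Node g l r) (Node g l' r)"
  using ocong.comp_right[of l l' 1 "Node g Leaf r"] by simp

lemma ocong_Node_right: "ocong r r' \<Longrightarrow> ocong (Node g l r) (Node g l r')"
  using ocong.comp_right[of r r' "arity l + 1" "Node g l Leaf"] by simp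

text \<open>For \<open>g = GW\<close> this is \<open>w \<circ>\<^sub>1 w = w \<circ>\<^sub>2 w\<close>, for \<open>g = GA\<close> it is \<open>a \<circ>\<^sub>1 w = a \<circ>\<^sub>2 w\<close>,
  in both cases grafted into the context x, y, z.\<close>
lemma ocong_slide_GW: "ocong (Node g (Node GW x y) z) (Node g x (Node GW y z))"
proof -
  have base: "ocong (Node g (fgen GW) Leaf) (Node g Leaf (fgen GW))"
    using ocong.rel_w ocong.rel_a by (cases g) simp_all
  have "ocong (Node g (fgen GW) z) (Node g Leaf (Node GW Leaf z))"
    using ocong.comp_left[OF base, of 3 z] by simp
  from ocong.comp_left[OF this, of 2 y]
  have "ocong (Node g (Node GW Leaf y) z) (Node g Leaf (Node GW y z))" by simp
  from ocong.comp_left[OF this, of 1 x] show ?thesis by simp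
qed

function push_GW_right :: "ftree \<Rightarrow> ftree" where
  "push_GW_right Leaf = Leaf"
| "push_GW_right (Node g (Node GW x y) z) = push_GW_right (Node g x (Node GW y z))"
| "push_GW_right (Node g Leaf z) = Node g Leaf z"
| "push_GW_right (Node g (Node GA x y) z) = Node g (Node GA x y) z"
  by pat_completeness auto
termination
  by (relation "measure (\<lambda>t. case t of Leaf \<Rightarrow> 0 | Node g l r \<Rightarrow> size l)") auto

lemma ocong_push_GW_right: "ocong t (push_GW_right t)"
  by (induction t rule: push_GW_right.induct) (auto intro: ocong.refl ocong.trans[OF ocong_slide_GW])

lemma push_GW_right_cases:
  "push_GW_right t = Leaf \<or> (\<exists>g l r. push_GW_right t = Node g l r \<and> (\<forall>x y. l \<noteq> Node GW x y))"
  by (induction t rule: push_GW_right.induct) auto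

lemma root_arc_in_tree_arcs_iff: "(1, arity l + arity r + 1) \<in> tree_arcs (Node g l r) \<longleftrightarrow> g = GA"
proof
  assume "(1, arity l + arity r + 1) \<in> tree_arcs (Node g l r)"
  then show "g = GA"
  proof (rule tree_arcs_NodeE)
    assume "(1, arity l + arity r + 1) \<in> tree_arcs l"
    then show ?thesis using tree_arcs_bounds arity_pos[of r] by fastforce
  next
    fix a' b' assume "(a', b') \<in> tree_arcs r" "1 = a' + arity l"
    then show ?thesis using tree_arcs_bounds[of a' b' r] arity_pos[of l] by simp
  qed
qed simp

lemma tree_arcs_left: "tree_arcs l = {(a, b) \<in> tree_arcs (Node g l r). b \<le> arity l + 1}"
proof (intro set_eqI iffI)
  fix x assume "x \<in> {(a, b) \<in> tree_arcs (Node g l r). b \<le> arity l + 1}"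
  then obtain a b where x: "x = (a, b)" "(a, b) \<in> tree_arcs (Node g l r)" "b \<le> arity l + 1" by auto
  from x(2) show "x \<in> tree_arcs l"
  proof (rule tree_arcs_NodeE)
    fix a' b' assume "(a', b') \<in> tree_arcs r" "b = b' + arity l"
    then show ?thesis using tree_arcs_bounds[of a' b' r] x by simp
  qed (use x arity_pos[of r] in auto)
qed (use tree_arcs_bounds in auto)

lemma tree_arcs_right:
  "tree_arcs r = {(a, b). 1 \<le> a \<and> (a + arity l, b + arity l) \<in> tree_arcs (Node g l r)}"
proof (intro set_eqI iffI)
  fix x assume "x \<in> {(a, b). 1 \<le> a \<and> (a + arity l, b + arity l) \<in> tree_arcs (Node g l r)}"
  then obtain a b where x: "x = (a, b)" "(a + arity l, b + arity l) \<in> tree_arcs (Node g l r)" "1 \<le> a"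
    by auto
  from x(2) show "x \<in> tree_arcs r"
  proof (rule tree_arcs_NodeE)
    assume "(a + arity l, b + arity l) \<in> tree_arcs l"
    then show ?thesis using tree_arcs_bounds[of "a + arity l" "b + arity l" l] by auto
  qed (use x arity_pos[of l] in auto)
qed (use tree_arcs_bounds in \<open>auto simp: shift_arcs_def\<close>)

lemma arity_left_le_of_tree_arcs_eq:
  assumes l': "\<forall>x y. l' \<noteq> Node GW x y"
    and arity: "arity (Node g l r) = arity (Node g' l' r')"
    and arcs: "tree_arcs (Node g l r) = tree_arcs (Node g' l' r')"
  shows "arity l' \<le> arity l"
proof (cases l')
  case Leaf
  then show ?thesis using arity_pos[of l] by simp
next
  case (Node h x y)
  with l' have "h = GA" by (cases h) auto
  with Node have "(1, arity l' + 1) \<in> tree_arcs (Node g l r)"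
    unfolding arcs by simp
  then show ?thesis
  proof (rule tree_arcs_NodeE)
    assume "arity l' + 1 = arity l + arity r + 1"
    then show ?thesis using arity arity_pos[of r'] by simp
  next
    assume "(1, arity l' + 1) \<in> tree_arcs l"
    then show ?thesis using tree_arcs_bounds by fastforce
  next
    fix a' b' assume "(a', b') \<in> tree_arcs r" "1 = a' + arity l"
    then show ?thesis using tree_arcs_bounds[of a' b' r] arity_pos[of l] by simp
  qed
qed

lemma Node_eq_components_of_tree_arcs_eq:
  assumes l: "\<forall>x y. l \<noteq> Node GW x y" and l': "\<forall>x y. l' \<noteq> Node GW x y"
    and arity: "arity (Node g l r) = arity (Node g' l' r')"
    and arcs: "tree_arcs (Node g l r) = tree_arcs (Node g' l' r')"
  shows "g = g' \<and> arity l = arity l' \<and> tree_arcs l = tree_arcs l'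
       \<and> arity r = arity r' \<and> tree_arcs r = tree_arcs r'"
proof -
  have arity_l: "arity l = arity l'"
    using arity_left_le_of_tree_arcs_eq[OF l' arity arcs]
      arity_left_le_of_tree_arcs_eq[OF l arity[symmetric] arcs[symmetric]] by simp
  with arity have arity_r: "arity r = arity r'" by simp
  have "g = GA \<longleftrightarrow> (1, arity l + arity r + 1) \<in> tree_arcs (Node g l r)"
    by (rule root_arc_in_tree_arcs_iff[symmetric])
  also have "\<dots> \<longleftrightarrow> (1, arity l' + arity r' + 1) \<in> tree_arcs (Node g' l' r')"
    by (simp only: arcs arity_l arity_r)
  also have "\<dots> \<longleftrightarrow> g' = GA"
    by (rule root_arc_in_tree_arcs_iff)
  finally have "g = g'" by (cases g; cases g') auto
  moreover have "tree_arcs l = tree_arcs l'"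
    by (subst tree_arcs_left[of l g r], subst tree_arcs_left[of l' g' r']) (simp only: arcs arity_l)
  moreover have "tree_arcs r = tree_arcs r'"
    by (subst tree_arcs_right[of r l g], subst tree_arcs_right[of r' l' g']) (simp only: arcs arity_l)
  ultimately show ?thesis using arity_l arity_r by simp
qed

lemma ocong_of_tree_arcs_eq: "arity t = arity s \<Longrightarrow> tree_arcs t = tree_arcs s \<Longrightarrow> ocong t s"
proof (induction t arbitrary: s rule: measure_induct_rule[where f = arity])
  case (less t s)
  let ?t = "push_GW_right t" and ?s = "push_GW_right s"
  have "eval ?t = eval t"
    by (rule ocong_imp_eval_eq[OF ocong.sym[OF ocong_push_GW_right]])
  then have arity_t: "arity ?t = arity t"
    by (simp only: eval_eq_iff)
  have "eval ?t = eval s"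
    using \<open>eval ?t = eval t\<close> less.prems by (simp only: eval_eq_iff)
  also have "\<dots> = eval ?s"
    by (rule ocong_imp_eval_eq[OF ocong_push_GW_right])
  finally have arity: "arity ?t = arity ?s" and arcs: "tree_arcs ?t = tree_arcs ?s"
    by (simp_all only: eval_eq_iff)
  have "ocong ?t ?s"
  proof (cases "?t = Leaf")
    case True
    with arity have "?s = Leaf" by (simp add: arity_eq_1_iff[symmetric])
    with True show ?thesis by (simp add: ocong.refl)
  next
    case False
    then obtain g l r where t: "?t = Node g l r" "\<forall>x y. l \<noteq> Node GW x y"
      using push_GW_right_cases[of t] by blast
    from False arity have "?s \<noteq> Leaf" by (simp add: arity_eq_1_iff[symmetric])
    then obtain g' l' r' where s: "?s = Node g' l' r'" "\<forall>x y. l' \<noteq> Node GW x y"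
      using push_GW_right_cases[of s] by blast
    have eq: "g = g' \<and> arity l = arity l' \<and> tree_arcs l = tree_arcs l'
        \<and> arity r = arity r' \<and> tree_arcs r = tree_arcs r'"
      using Node_eq_components_of_tree_arcs_eq[OF t(2) s(2)] arity arcs unfolding t(1) s(1) by blast
    have "arity l < arity t" "arity r < arity t"
      using arity_t t(1) arity_pos[of l] arity_pos[of r] by auto
    then have "ocong l l'" "ocong r r'"
      using less.IH eq by simp_all
    then have "ocong (Node g l r) (Node g l' r')"
      by (rule ocong.trans[OF ocong_Node_left ocong_Node_right])
    with eq show ?thesis by (simp add: t(1) s(1))
  qed
  from ocong.trans[OF ocong_push_GW_right[of t] ocong.trans[OF this ocong.sym[OF ocong_push_GW_right[of s]]]]
  show ?case .
qed

theorem theorem3p27: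
  shows "(\<forall>t. bnc_size (eval t) = arity t)
       \<and> (\<forall>t i s. 1 \<le> i \<and> i \<le> arity t \<longrightarrow> eval (graft t i s) = bnc_comp (eval t) i (eval s))
       \<and> range eval = gen_suboperad {T_bbb, T_bub}
       \<and> (\<forall>t s. eval t = eval s \<longleftrightarrow> ocong t s)"
proof (intro conjI allI impI)
  show "bnc_size (eval t) = arity t" for t
    by (rule bnc_size_eval)
  show "eval (graft t i s) = bnc_comp (eval t) i (eval s)" if "1 \<le> i \<and> i \<le> arity t" for t i s
    using that by (simp add: eval_graft)
  show "range eval = gen_suboperad {T_bbb, T_bub}"
    using eval_in_gen_suboperad gen_suboperad_in_range_eval by blast
  show "eval t = eval s \<longleftrightarrow> ocong t s" for t s
  proof
    assume "eval t = eval s"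
    then show "ocong t s" by (simp add: eval_eq_iff ocong_of_tree_arcs_eq)
  qed (rule ocong_imp_eval_eq)
qed

end
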